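(* Let $\psi=13/10$, $\chi=1/2$, and $f(r)=\frac{\psi-r^{\chi}}{1+r}$ for $r\in(0,1]$. Parameterize $r$ by $t$ via $e^{t}=\frac{r}{1+r}$ (so $t\in(-\infty,\ln(1/2)]$). Then $f$, viewed as a function of $t$, i.e. $t\mapsto f\big(\frac{e^t}{1-e^t}\big)$, is concave on $(-\infty,\ln(1/2)]$. *)

theory Defs
  imports "HOL-Analysis.Analysis"
begin

definition psi :: real where "psi = 13/10"
definition chi :: real where "chi = 1/2"

definition f25 :: "real \<Rightarrow> real" where
  "f25 r = (psi - r powr chi) / (1 + r)"

end

theory Submission
  imports Defs
begin

text \<open>
  With \<open>e = exp t\<close> we have \<open>r = e / (1 - e)\<close>, \<open>1 + r = 1 / (1 - e)\<close> and
  \<open>sqrt r * (1 - e) = sqrt (e - e\<^sup>2)\<close>, so \<open>f\<close> becomes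
  \<open>\<psi> (1 - e) - sqrt (e - e\<^sup>2)\<close>. Its second derivative in \<open>t\<close> is
  \<open>-\<psi> e - e\<^sup>2 (1 - 6e + 4e\<^sup>2) / (4 (e - e\<^sup>2)^(3/2))\<close>; for \<open>e \<le> 1/2\<close> the
  positive part \<open>q = 6e - 4e\<^sup>2 - 1\<close> of the second term satisfies \<open>q \<le> 1\<close> and
  \<open>q \<le> 3e\<close>, while \<open>(1 - e)\<^sup>3 \<ge> 1/8\<close>. Squaring reduces nonpositivity to
  \<open>3 \<le> 2\<psi>\<^sup>2\<close>, which holds for \<open>\<psi> = 13/10\<close>; the argument is
  carried out for an arbitrary constant \<open>c\<close> in place of \<open>\<psi>\<close>.
\<close>

definition f_exp :: "real \<Rightarrow> real \<Rightarrow> real" where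
  "f_exp c t = c * (1 - exp t) - sqrt (exp t - exp t ^ 2)"

definition f_exp' :: "real \<Rightarrow> real \<Rightarrow> real" where
  "f_exp' c t = - c * exp t - exp t * (1 - 2 * exp t) / (2 * sqrt (exp t - exp t ^ 2))"

definition f_exp'' :: "real \<Rightarrow> real \<Rightarrow> real" where
  "f_exp'' c t =
     - c * exp t - exp t ^ 2 * (1 - 6 * exp t + 4 * exp t ^ 2) / (4 * sqrt (exp t - exp t ^ 2) ^ 3)"

lemma exp_minus_exp_squared_pos: "(t::real) < 0 \<Longrightarrow> 0 < exp t - exp t ^ 2"
  by (simp add: power2_eq_square)

lemma has_real_derivative_f_exp:
  assumes "t < 0"
  shows "(f_exp c has_real_derivative f_exp' c t) (at t)"
  unfolding f_exp_def[abs_def] f_exp'_def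
  using exp_minus_exp_squared_pos[OF assms]
  by (auto intro!: derivative_eq_intros simp: field_simps power2_eq_square)

lemma has_real_derivative_f_exp':
  assumes "t < 0"
  shows "(f_exp' c has_real_derivative f_exp'' c t) (at t)"
  unfolding f_exp'_def[abs_def] f_exp''_def
  using exp_minus_exp_squared_pos[OF assms]
  by (auto intro!: derivative_eq_intros simp: field_simps power2_eq_square power3_eq_cube)

lemma cubic_le_sqrt_cube:
  fixes c u :: real
  assumes u: "0 < u" "u \<le> 1/2" and c: "0 \<le> c" "3 \<le> 2 * c ^ 2"
  shows "u * (6 * u - 4 * u ^ 2 - 1) \<le> 4 * c * sqrt (u - u ^ 2) ^ 3"
proof -
  define q where "q = 6 * u - 4 * u ^ 2 - 1"
  have factor: "u - u ^ 2 = u * (1 - u)"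
    by (simp add: power2_eq_square algebra_simps)
  then have "0 \<le> u - u ^ 2" using u by simp
  then have rhs_nonneg: "0 \<le> 4 * c * sqrt (u - u ^ 2) ^ 3" using c by simp
  show ?thesis
  proof (cases "q \<le> 0")
    case True
    then show ?thesis
      using u rhs_nonneg unfolding q_def by (intro order.trans[OF mult_nonneg_nonpos[of u]]) auto
  next
    case False
    then have "0 < q" by simp
    have "q \<le> 1"
    proof -
      have "1 - q = 2 * (1 - 2 * u) * (1 - u)" by (simp add: q_def power2_eq_square algebra_simps)
      moreover have "0 \<le> (1 - 2 * u) * (1 - u)" using u by simp
      ultimately show ?thesis by linarith
    qed
    have "q \<le> 3 * u"
    proof -
      have "3 * u - q = 4 * (u - 3/8) ^ 2 + 7/16" by (simp add: q_def power2_eq_square algebra_simps)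
      moreover have "0 \<le> (u - 3/8) ^ 2" by simp
      ultimately show ?thesis by linarith
    qed
    have "u ^ 3 * (1/2) ^ 3 \<le> u ^ 3 * (1 - u) ^ 3"
      using u by (intro mult_left_mono power_mono) auto
    moreover have "(u - u ^ 2) ^ 3 = u ^ 3 * (1 - u) ^ 3"
      by (simp add: factor power_mult_distrib)
    ultimately have cube_bound: "u ^ 3 \<le> 8 * (u - u ^ 2) ^ 3"
      by (simp add: power_divide)
    have "(u * q) ^ 2 = u ^ 2 * q * q"
      by (simp add: power2_eq_square)
    also have "\<dots> \<le> u ^ 2 * q"
      using \<open>0 < q\<close> \<open>q \<le> 1\<close> by (intro mult_left_le) simp_all
    also have "\<dots> \<le> 3 * u ^ 3"
      using \<open>q \<le> 3 * u\<close> u by (simp add: power2_eq_square power3_eq_cube)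
    also have "\<dots> \<le> 2 * c ^ 2 * u ^ 3"
      using c u by (simp add: mult_right_mono)
    also have "\<dots> \<le> 16 * c ^ 2 * (u - u ^ 2) ^ 3"
      using mult_left_mono[OF cube_bound, of "2 * c ^ 2"] by simp
    also have "\<dots> = (4 * c * sqrt (u - u ^ 2) ^ 3) ^ 2"
    proof -
      have "(sqrt (u - u ^ 2) ^ 3) ^ 2 = (sqrt (u - u ^ 2) ^ 2) ^ 3"
        by (simp flip: power_mult)
      then show ?thesis using \<open>0 \<le> u - u ^ 2\<close> by (simp add: power_mult_distrib)
    qed
    finally show ?thesis
      using rhs_nonneg unfolding q_def[symmetric] by (rule power2_le_imp_le)
  qed
qed

lemma f_exp''_nonpos:
  assumes "t \<le> ln (1/2)" "0 \<le> c" "3 \<le> 2 * c ^ 2"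
  shows "f_exp'' c t \<le> 0"
proof -
  define u where "u = exp t"
  define s where "s = sqrt (u - u ^ 2)"
  have u: "0 < u" "u \<le> 1/2"
    using assms(1) by (auto simp: u_def ln_ge_iff)
  then have "0 < s" by (simp add: s_def power2_eq_square)
  have "u * (6 * u - 4 * u ^ 2 - 1) \<le> 4 * c * s ^ 3"
    unfolding s_def using u assms(2,3) by (rule cubic_le_sqrt_cube)
  then have "u * (6 * u - 4 * u ^ 2 - 1) / (4 * s ^ 3) \<le> c"
    using \<open>0 < s\<close> by (simp add: divide_le_eq algebra_simps)
  moreover have "f_exp'' c t = - u * (c - u * (6 * u - 4 * u ^ 2 - 1) / (4 * s ^ 3))"
    unfolding f_exp''_def u_def[symmetric] s_def[symmetric]
    using \<open>0 < s\<close> by (simp add: field_simps power2_eq_square)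
  ultimately show ?thesis
    using u by (simp add: mult_le_0_iff)
qed

lemma concave_on_f_exp:
  assumes "0 \<le> c" "3 \<le> 2 * c ^ 2"
  shows "concave_on {..ln (1/2)} (f_exp c)"
proof (rule f''_le0_imp_concave)
  fix t :: real
  assume t: "t \<in> {..ln (1/2)}"
  then have "t < 0"
    using ln_less_zero[of "1/2"] unfolding atMost_iff by linarith
  then show "(f_exp c has_real_derivative f_exp' c t) (at t)"
    and "(f_exp' c has_real_derivative f_exp'' c t) (at t)"
    by (rule has_real_derivative_f_exp has_real_derivative_f_exp')+
  show "f_exp'' c t \<le> 0"
    using t assms by (auto intro: f_exp''_nonpos)
qed simp

lemma f25_exp_coordinate:
  assumes "t < 0"
  shows "f25 (exp t / (1 - exp t)) = f_exp psi t"
proof -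
  define e where "e = exp t"
  have e: "0 < e" "e < 1"
    using assms by (auto simp: e_def)
  have "sqrt (e / (1 - e)) * (1 - e) = sqrt (e / (1 - e) * (1 - e) ^ 2)"
    unfolding real_sqrt_mult using e by simp
  also have "\<dots> = sqrt (e - e ^ 2)"
    using e by (simp add: power2_eq_square field_simps)
  finally have "sqrt (e / (1 - e)) * (1 - e) = sqrt (e - e ^ 2)" .
  moreover have "1 + e / (1 - e) = 1 / (1 - e)"
    using e by (simp add: field_simps)
  ultimately show ?thesis
    using e unfolding f25_def f_exp_def e_def[symmetric]
    by (simp add: chi_def powr_half_sqrt) (simp add: field_simps)
qed

lemma concave_on_cong:
  assumes "\<And>x. x \<in> S \<Longrightarrow> f x = g x"
  shows "concave_on S f \<longleftrightarrow> concave_on S g"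
proof (cases "convex S")
  case True
  have "u *\<^sub>R x + v *\<^sub>R y \<in> S"
    if "x \<in> S" "y \<in> S" "0 \<le> u" "0 \<le> v" "u + v = 1" for x y u v
    by (rule convexD[OF True that])
  then show ?thesis
    by (simp add: concave_on_iff assms)
qed (simp add: concave_on_iff)

theorem lemma25:
  shows "concave_on {..ln (1/2)} (\<lambda>t::real. f25 (exp t / (1 - exp t)))"
proof -
  have "ln (1/2 :: real) < 0"
    by (rule ln_less_zero) simp_all
  then have "f25 (exp t / (1 - exp t)) = f_exp psi t" if "t \<in> {..ln (1/2)}" for t
    using that unfolding atMost_iff by (intro f25_exp_coordinate) linarith
  then have "concave_on {..ln (1/2)} (\<lambda>t::real. f25 (exp t / (1 - exp t))) \<longleftrightarrow>
      concave_on {..ln (1/2)} (f_exp psi)"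
    by (rule concave_on_cong)
  also have "\<dots>"
    by (rule concave_on_f_exp) (simp_all add: psi_def power2_eq_square)
  finally show ?thesis .
qed

end
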